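(* Let $d\ge3$ and suppose $\mathbf z_1,\dots,\mathbf z_d\in\mathbb R^d$ are linearly independent (and $\boldsymbol\alpha_1,\boldsymbol\alpha_2$ are well defined). Then \[|\boldsymbol\alpha_1-\boldsymbol\alpha_2|=\frac{\det\underline\Lambda_{2,d-2}\cdot\det\Lambda_{1,d}}{\det\underline\Lambda_{1,d-1}\cdot\det\underline\Lambda_{2,d-1}}.\]
   Context: $|\cdot|$ is the Euclidean norm. For $\mathbf x=(x_1,\dots,x_d)\in\mathbb R^d$ write $\underline{\mathbf x}=(x_1,\dots,x_{d-1})$. Let $\pi_d=\{\mathbf x\in\mathbb R^d:x_d=1\}$. For vectors $\mathbf z_1,\dots,\mathbf z_d$: $\det\Lambda_{1,d}=|\det(\mathbf z_1,\dots,\mathbf z_d)|$; for $1\le l\le d-1$, $\det\underline\Lambda_{k,l}=|\underline{\mathbf z_k}\wedge\dots\wedge\underline{\mathbf z_{k+l-1}}|$, the $l$-dimensional volume of the parallelepiped spanned by $\underline{\mathbf z_k},\dots,\underline{\mathbf z_{k+l-1}}$. When $\underline{\mathbf z_k},\dots,\underline{\mathbf z_{k+d-2}}$ are linearly independent, $\boldsymbol\alpha_k$ denotes the unique point of $\pi_d$ orthogonal to $\mathbf z_k,\dots,\mathbf z_{k+d-2}$; here $\boldsymbol\alpha_1\perp\mathbf z_1,\dots,\mathbf z_{d-1}$ and $\boldsymbol\alpha_2\perp\mathbf z_2,\dots,\mathbf z_d$. *)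

theory Defs
  imports Complex_Main "Jordan_Normal_Form.Determinant"
begin

text \<open>Vectors of R^d are represented as real vec of dimension d; the paper's
  coordinate x_i is the component with index i-1. The vectors z_1..z_d are
  given by a function z :: nat => real vec, used at indices 1..d.\<close>

definition eucl_norm :: "real vec \<Rightarrow> real" where
  "eucl_norm v = sqrt (v \<bullet> v)"

definition underline :: "real vec \<Rightarrow> real vec" where
  "underline x = vec (dim_vec x - 1) (\<lambda>i. x $ i)"

definition lin_indep_family :: "nat \<Rightarrow> nat \<Rightarrow> (nat \<Rightarrow> real vec) \<Rightarrow> bool" where
  "lin_indep_family n m vs \<longleftrightarrow>
     (\<forall>c :: nat \<Rightarrow> real.
        vec n (\<lambda>i. \<Sum>j<m. c j * (vs j $ i)) = 0\<^sub>v n \<longrightarrow> (\<forall>j<m. c j = 0))"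

text \<open>l-dimensional volume of the parallelepiped spanned by vs 0..l-1
  (norm of the wedge product), via the Gram determinant.\<close>
definition par_volume :: "nat \<Rightarrow> (nat \<Rightarrow> real vec) \<Rightarrow> real" where
  "par_volume l vs = sqrt (det (mat l l (\<lambda>(i,j). vs i \<bullet> vs j)))"

definition detLam_under :: "(nat \<Rightarrow> real vec) \<Rightarrow> nat \<Rightarrow> nat \<Rightarrow> real" where
  "detLam_under z k l = par_volume l (\<lambda>j. underline (z (k + j)))"

definition detLam_full :: "nat \<Rightarrow> (nat \<Rightarrow> real vec) \<Rightarrow> real" where
  "detLam_full d z = \<bar>det (mat_of_cols d (map z [1..<d+1]))\<bar>"

definition pi_d :: "nat \<Rightarrow> real vec set" where
  "pi_d d = {x. dim_vec x = d \<and> x $ (d - 1) = 1}"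

definition alpha :: "nat \<Rightarrow> (nat \<Rightarrow> real vec) \<Rightarrow> nat \<Rightarrow> real vec" where
  "alpha d z k = (THE a. a \<in> pi_d d \<and> (\<forall>j\<in>{k..k+d-2}. a \<bullet> z j = 0))"

end

(* Let u_j be z_j without its last coordinate and w the first d-1 coordinates of
   alpha_1 - alpha_2; the last coordinates of alpha_1 and alpha_2 are both 1, so
   |alpha_1 - alpha_2| = |w|.  Both alphas are orthogonal to z_2, ..., z_{d-1}, hence w is
   orthogonal to u_2, ..., u_{d-1}, while w . u_1 = -alpha_2 . z_1.  "Base times height"
   then gives |w| vol(u_1..u_{d-1}) = |alpha_2 . z_1| vol(u_2..u_{d-1}).  On the other
   hand, alpha_2 is orthogonal to z_2, ..., z_d, and expanding det(z_1..z_d) along the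
   row of alpha_2 gives |det(z_1..z_d)| = |alpha_2 . z_1| vol(u_2..u_d).  Eliminating
   alpha_2 . z_1 yields the formula. *)

theory Submission
  imports Defs
begin

definition colmat :: "nat \<Rightarrow> nat \<Rightarrow> (nat \<Rightarrow> real vec) \<Rightarrow> real mat" where
  "colmat n m f = mat n m (\<lambda>(i,j). f j $ i)"

lemma colmat_carrier[simp]: "colmat n m f \<in> carrier_mat n m"
  unfolding colmat_def by simp

lemma dim_colmat[simp]: "dim_row (colmat n m f) = n" "dim_col (colmat n m f) = m"
  unfolding colmat_def by simp_all

lemma index_colmat[simp]: "i < n \<Longrightarrow> j < m \<Longrightarrow> colmat n m f $$ (i,j) = f j $ i"
  unfolding colmat_def by simp

lemma col_colmat: "j < m \<Longrightarrow> f j \<in> carrier_vec n \<Longrightarrow> col (colmat n m f) j = f j"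
  unfolding colmat_def by (intro eq_vecI) auto

lemma scalar_prod_mat_eq_transpose_mult:
  assumes "\<And>i. i < m \<Longrightarrow> f i \<in> carrier_vec n" and "\<And>j. j < k \<Longrightarrow> g j \<in> carrier_vec n"
  shows "mat m k (\<lambda>(i,j). f i \<bullet> g j) = transpose_mat (colmat n m f) * colmat n k g"
  by (rule eq_matI) (auto simp: col_colmat assms)

lemma det_scalar_prod_mat:
  assumes f: "\<And>i. i < n \<Longrightarrow> f i \<in> carrier_vec n"
    and g: "\<And>j. j < n \<Longrightarrow> g j \<in> carrier_vec n"
  shows "det (mat n n (\<lambda>(i,j). f i \<bullet> g j)) = det (colmat n n f) * det (colmat n n g)"
proof -
  have "det (mat n n (\<lambda>(i,j). f i \<bullet> g j)) = det (transpose_mat (colmat n n f) * colmat n n g)"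
    using scalar_prod_mat_eq_transpose_mult[of n f n n g, OF f g] by simp
  also have "\<dots> = det (colmat n n f) * det (colmat n n g)"
    by (simp add: det_mult[of _ n] det_transpose[of _ n])
  finally show ?thesis .
qed

lemma lin_indep_family_mult_colmat_eq_0:
  assumes "lin_indep_family n m vs" and x: "x \<in> carrier_vec m"
    and "colmat n m vs *\<^sub>v x = 0\<^sub>v n"
  shows "x = 0\<^sub>v m"
proof -
  have "vec n (\<lambda>i. \<Sum>j<m. x $ j * vs j $ i) = colmat n m vs *\<^sub>v x"
    using x by (intro eq_vecI) (auto simp: colmat_def scalar_prod_def atLeast0LessThan mult.commute)
  with assms have "\<forall>j<m. x $ j = 0" unfolding lin_indep_family_def by simp
  thus ?thesis using x by (intro eq_vecI) auto
qed

lemma lin_indep_family_det_colmat_nonzero: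
  "lin_indep_family n n vs \<Longrightarrow> det (colmat n n vs) \<noteq> 0"
  using lin_indep_family_mult_colmat_eq_0 det_0_iff_vec_prod_zero[OF colmat_carrier] by blast

lemma lin_indep_family_Suc_shift:
  assumes "lin_indep_family n (Suc m) f"
  shows "lin_indep_family n m (\<lambda>j. f (Suc j))"
  unfolding lin_indep_family_def
proof (intro allI impI)
  fix c :: "nat \<Rightarrow> real" and j
  assume c: "vec n (\<lambda>i. \<Sum>j<m. c j * f (Suc j) $ i) = 0\<^sub>v n" and j: "j < m"
  have "vec n (\<lambda>i. \<Sum>j<Suc m. case_nat 0 c j * f j $ i) = 0\<^sub>v n"
    using c unfolding sum.lessThan_Suc_shift by simp
  with assms have "\<forall>j<Suc m. case_nat 0 c j = 0" unfolding lin_indep_family_def by blast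
  with j show "c j = 0" by fastforce
qed

lemma scalar_prod_self_eq_0:
  assumes "(v :: real vec) \<in> carrier_vec n" and "v \<bullet> v = 0"
  shows "v = 0\<^sub>v n"
proof -
  have "\<forall>i\<in>{0..<n}. v $ i * v $ i = 0"
    using assms by (subst sum_nonneg_eq_0_iff[symmetric]) (auto simp: scalar_prod_def)
  thus ?thesis using assms(1) by (intro eq_vecI) auto
qed

lemma lin_indep_family_gram_det_nonzero:
  assumes ind: "lin_indep_family n m vs" and vs: "\<And>j. j < m \<Longrightarrow> vs j \<in> carrier_vec n"
  shows "det (mat m m (\<lambda>(i,j). vs i \<bullet> vs j)) \<noteq> 0"
proof
  let ?V = "colmat n m vs"
  assume "det (mat m m (\<lambda>(i,j). vs i \<bullet> vs j)) = 0"
  then obtain x where x: "x \<in> carrier_vec m" "x \<noteq> 0\<^sub>v m" "(transpose_mat ?V * ?V) *\<^sub>v x = 0\<^sub>v m"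
    using det_0_iff_vec_prod_zero[OF mult_carrier_mat[of _ m n], of "transpose_mat ?V" ?V]
    by (subst (asm) scalar_prod_mat_eq_transpose_mult[of m vs n m vs, OF vs vs]) auto
  have Vx: "?V *\<^sub>v x \<in> carrier_vec n" using mult_mat_vec_carrier[OF colmat_carrier x(1)] .
  have "(?V *\<^sub>v x) \<bullet> (?V *\<^sub>v x) = (transpose_mat ?V *\<^sub>v (?V *\<^sub>v x)) \<bullet> x"
    using transpose_vec_mult_scalar[OF colmat_carrier x(1) Vx] by simp
  also have "\<dots> = 0"
    using x by (simp add: assoc_mult_mat_vec[of _ m n _ m, symmetric])
  finally have "?V *\<^sub>v x = 0\<^sub>v n" by (rule scalar_prod_self_eq_0[OF Vx])
  with x ind show False using lin_indep_family_mult_colmat_eq_0 by blast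
qed

lemma lin_indep_family_ex1_solution:
  assumes ind: "lin_indep_family n n vs" and vs: "\<And>j. j < n \<Longrightarrow> vs j \<in> carrier_vec n"
  shows "\<exists>!x. x \<in> carrier_vec n \<and> (\<forall>j<n. vs j \<bullet> x = c j)"
proof -
  let ?A = "transpose_mat (colmat n n vs)"
  have A: "?A \<in> carrier_mat n n" by simp
  have detA: "det ?A \<noteq> 0"
    using lin_indep_family_det_colmat_nonzero[OF ind] by (simp add: det_transpose[of _ n])
  have sol: "(\<forall>j<n. vs j \<bullet> x = c j) \<longleftrightarrow> ?A *\<^sub>v x = vec n c" if "x \<in> carrier_vec n" for x
    using vs by (auto simp: col_colmat vec_eq_iff)
  obtain B where B: "B \<in> carrier_mat n n" "?A * B = 1\<^sub>m n"
    using det_non_zero_imp_unit[OF A detA, of "()"] unfolding Units_def ring_mat_def by auto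
  define x where "x = B *\<^sub>v vec n c"
  have x: "x \<in> carrier_vec n" unfolding x_def using B(1) by simp
  have Ax: "?A *\<^sub>v x = vec n c"
    using B unfolding x_def by (simp add: assoc_mult_mat_vec[of _ n n _ n, symmetric])
  have uniq: "y = x" if "y \<in> carrier_vec n" "?A *\<^sub>v y = vec n c" for y
  proof -
    have "y = (B * ?A) *\<^sub>v y"
      using mat_mult_left_right_inverse[OF A B] that(1) by simp
    also have "\<dots> = x"
      unfolding x_def assoc_mult_mat_vec[OF B(1) A that(1)] that(2) ..
    finally show ?thesis .
  qed
  show ?thesis
  proof (rule ex1I[of _ x])
    show "x \<in> carrier_vec n \<and> (\<forall>j<n. vs j \<bullet> x = c j)" using x Ax sol by blast
    show "y = x" if "y \<in> carrier_vec n \<and> (\<forall>j<n. vs j \<bullet> y = c j)" for y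
      using that sol uniq by blast
  qed
qed

lemma par_volume_eq_abs_det:
  assumes "\<And>j. j < n \<Longrightarrow> vs j \<in> carrier_vec n"
  shows "par_volume n vs = \<bar>det (colmat n n vs)\<bar>"
  using det_scalar_prod_mat[of n vs vs] assms unfolding par_volume_def by simp

lemma par_volume_nonzero:
  "lin_indep_family n m vs \<Longrightarrow> (\<And>j. j < m \<Longrightarrow> vs j \<in> carrier_vec n) \<Longrightarrow> par_volume m vs \<noteq> 0"
  unfolding par_volume_def using lin_indep_family_gram_det_nonzero by simp

lemma detLam_full_eq_abs_det: "detLam_full d z = \<bar>det (colmat d d (\<lambda>j. z (Suc j)))\<bar>"
proof -
  have "mat_of_cols d (map z [1..<d+1]) = colmat d d (\<lambda>j. z (Suc j))"
    unfolding mat_of_cols_def colmat_def by (rule eq_matI) (auto simp del: upt_Suc)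
  thus ?thesis unfolding detLam_full_def by simp
qed

lemma det_row_single_entry:
  fixes A :: "'a :: comm_ring_1 mat"
  assumes A: "A \<in> carrier_mat n n" and r: "r < n" and c: "c < n"
    and zero: "\<And>j. j < n \<Longrightarrow> j \<noteq> c \<Longrightarrow> A $$ (r,j) = 0"
  shows "det A = A $$ (r,c) * cofactor A r c"
proof -
  have "det A = (\<Sum>j<n. A $$ (r,j) * cofactor A r j)" by (rule laplace_expansion_row[OF A r])
  also have "\<dots> = (\<Sum>j\<in>{c}. A $$ (r,j) * cofactor A r j)"
    by (rule sum.mono_neutral_right) (use c zero in auto)
  finally show ?thesis by simp
qed

lemma det_scalar_prod_mat_orth_first:
  assumes "\<And>j. 0 < j \<Longrightarrow> j \<le> m \<Longrightarrow> f 0 \<bullet> g j = 0"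
  shows "det (mat (Suc m) (Suc m) (\<lambda>(i,j). f i \<bullet> g j)) =
    (f 0 \<bullet> g 0) * det (mat m m (\<lambda>(i,j). f (Suc i) \<bullet> g (Suc j)))"
proof -
  let ?M = "mat (Suc m) (Suc m) (\<lambda>(i,j). f i \<bullet> g j)"
  have "det ?M = ?M $$ (0,0) * cofactor ?M 0 0"
    by (rule det_row_single_entry[of _ "Suc m"]) (use assms in auto)
  moreover have "mat_delete ?M 0 0 = mat m m (\<lambda>(i,j). f (Suc i) \<bullet> g (Suc j))"
    by (rule eq_matI) (auto simp: mat_delete_def)
  ultimately show ?thesis by (simp add: cofactor_def)
qed

text \<open>Base times height: replacing g 0 by w, the Gram determinants of (w, g 1, ..., g m)
  with itself and with (g 0, ..., g m) both factor through their first row.\<close>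

lemma norm_mult_abs_det_colmat_orth:
  assumes w: "w \<in> carrier_vec (Suc m)" and g: "\<And>j. j \<le> m \<Longrightarrow> g j \<in> carrier_vec (Suc m)"
    and ind: "lin_indep_family (Suc m) m (\<lambda>j. g (Suc j))"
    and orth: "\<And>j. 0 < j \<Longrightarrow> j \<le> m \<Longrightarrow> w \<bullet> g j = 0"
  shows "sqrt (w \<bullet> w) * \<bar>det (colmat (Suc m) (Suc m) g)\<bar> =
    \<bar>w \<bullet> g 0\<bar> * par_volume m (\<lambda>j. g (Suc j))"
proof -
  define h where "h = g(0 := w)"
  have h: "\<And>j. j < Suc m \<Longrightarrow> h j \<in> carrier_vec (Suc m)"
    and g': "\<And>j. j < Suc m \<Longrightarrow> g j \<in> carrier_vec (Suc m)"
    using w g by (auto simp: h_def)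
  define G where "G = det (mat m m (\<lambda>(i,j). g (Suc i) \<bullet> g (Suc j)))"
  define X where "X = det (colmat (Suc m) (Suc m) h)"
  define D where "D = det (colmat (Suc m) (Suc m) g)"
  have "G \<noteq> 0"
    unfolding G_def using lin_indep_family_gram_det_nonzero[OF ind] g by simp
  have "X * X = (w \<bullet> w) * G"
    using det_scalar_prod_mat[of "Suc m" h h] det_scalar_prod_mat_orth_first[of m h h] h orth
    by (simp add: X_def G_def h_def)
  moreover have "X * D = (w \<bullet> g 0) * G"
    using det_scalar_prod_mat[of "Suc m" h g] det_scalar_prod_mat_orth_first[of m h g] h g' orth
    by (simp add: X_def D_def G_def h_def)
  ultimately have "((w \<bullet> w) * D\<^sup>2) * G = ((w \<bullet> g 0)\<^sup>2 * G) * G"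
    by (metis (no_types, lifting) mult.commute mult.left_commute power2_eq_square)
  hence "(w \<bullet> w) * D\<^sup>2 = (w \<bullet> g 0)\<^sup>2 * G"
    using \<open>G \<noteq> 0\<close> by simp
  hence "sqrt (w \<bullet> w) * \<bar>D\<bar> = \<bar>w \<bullet> g 0\<bar> * sqrt G"
    by (metis real_sqrt_abs real_sqrt_mult)
  thus ?thesis unfolding D_def G_def par_volume_def .
qed

lemma underline_carrier[simp]: "x \<in> carrier_vec (Suc n) \<Longrightarrow> underline x \<in> carrier_vec n"
  unfolding underline_def by simp

lemma underline_index: "x \<in> carrier_vec (Suc n) \<Longrightarrow> i < n \<Longrightarrow> underline x $ i = x $ i"
  unfolding underline_def by simp

lemma scalar_prod_underline:
  assumes "a \<in> carrier_vec (Suc n)" and "b \<in> carrier_vec (Suc n)"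
  shows "a \<bullet> b = underline a \<bullet> underline b + a $ n * b $ n"
  using assms by (simp add: scalar_prod_def underline_def atLeast0LessThan)

lemma eq_iff_underline_eq:
  assumes "a \<in> carrier_vec (Suc n)" and "b \<in> carrier_vec (Suc n)"
  shows "a = b \<longleftrightarrow> underline a = underline b \<and> a $ n = b $ n"
proof
  assume h: "underline a = underline b \<and> a $ n = b $ n"
  have "a $ i = b $ i" if "i < Suc n" for i
  proof (cases "i = n")
    case False
    hence "i < n" using that by simp
    thus ?thesis using h underline_index[OF assms(1)] underline_index[OF assms(2)] by metis
  qed (use h in simp)
  thus "a = b" using assms by (intro eq_vecI) auto
qed simp

lemma pi_d_Suc_iff: "a \<in> pi_d (Suc n) \<longleftrightarrow> a \<in> carrier_vec (Suc n) \<and> a $ n = 1"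
  unfolding pi_d_def carrier_vec_def by auto

lemma det_colmat_unit_vecs_last:
  assumes "a \<in> pi_d (Suc n)"
  shows "det (colmat (Suc n) (Suc n) (\<lambda>i. if i = n then a else unit_vec (Suc n) i)) = 1"
  (is "det ?E = 1")
proof -
  have "det ?E = prod_list (diag_mat ?E)"
    by (rule det_upper_triangular) (auto simp: upper_triangular_def)
  also have "\<dots> = 1" using assms by (simp add: prod_list_diag_prod pi_d_Suc_iff)
  finally show ?thesis .
qed

text \<open>The matrix with rows e_0, ..., e_(n-1), a has determinant 1, and multiplying it with
  (f 0, ..., f n) makes the last row (a . f 0, 0, ..., 0).\<close>

lemma abs_det_colmat_orth:
  assumes a: "a \<in> pi_d (Suc n)" and f: "\<And>j. j \<le> n \<Longrightarrow> f j \<in> carrier_vec (Suc n)"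
    and orth: "\<And>j. 0 < j \<Longrightarrow> j \<le> n \<Longrightarrow> a \<bullet> f j = 0"
  shows "\<bar>det (colmat (Suc n) (Suc n) f)\<bar> =
    \<bar>a \<bullet> f 0\<bar> * \<bar>det (colmat n n (\<lambda>j. underline (f (Suc j))))\<bar>"
proof -
  define e where "e = (\<lambda>i. if i = n then a else unit_vec (Suc n) i)"
  have e: "\<And>i. i < Suc n \<Longrightarrow> e i \<in> carrier_vec (Suc n)" using a by (simp add: e_def pi_d_Suc_iff)
  have "det (colmat (Suc n) (Suc n) e) = 1"
    unfolding e_def by (rule det_colmat_unit_vecs_last[OF a])
  have uf: "underline (f (Suc j)) $ i = f (Suc j) $ i" if "i < n" "j < n" for i j
    using f[of "Suc j"] that by (simp add: underline_index)
  let ?M = "mat (Suc n) (Suc n) (\<lambda>(i,j). e i \<bullet> f j)"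
  have "det ?M = det (colmat (Suc n) (Suc n) f)"
    using det_scalar_prod_mat[of "Suc n" e f] \<open>det (colmat (Suc n) (Suc n) e) = 1\<close> e f by simp
  moreover have "det ?M = ?M $$ (n,0) * cofactor ?M n 0"
    by (rule det_row_single_entry[of _ "Suc n"]) (use orth in \<open>auto simp: e_def\<close>)
  moreover have "mat_delete ?M n 0 = colmat n n (\<lambda>j. underline (f (Suc j)))"
    by (rule eq_matI) (use f uf in \<open>auto simp: mat_delete_def e_def insert_index_def\<close>)
  ultimately show ?thesis by (simp add: cofactor_def e_def abs_mult)
qed

lemma pi_d_orthogonal_ex1:
  assumes z: "\<And>j. j < n \<Longrightarrow> z j \<in> carrier_vec (Suc n)"
    and ind: "lin_indep_family n n (\<lambda>j. underline (z j))"
  shows "\<exists>!a. a \<in> pi_d (Suc n) \<and> (\<forall>j<n. a \<bullet> z j = 0)"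
proof -
  have orth: "a \<bullet> z j = 0 \<longleftrightarrow> underline (z j) \<bullet> underline a = - z j $ n"
    if "a \<in> pi_d (Suc n)" "j < n" for a j
    using that z scalar_prod_underline[of a n "z j"]
      comm_scalar_prod[of "underline a" n "underline (z j)"]
    by (auto simp: pi_d_Suc_iff)
  have "\<And>j. j < n \<Longrightarrow> underline (z j) \<in> carrier_vec n" using z by simp
  then obtain x where x: "x \<in> carrier_vec n" "\<forall>j<n. underline (z j) \<bullet> x = - z j $ n"
    and uniq: "\<And>y. y \<in> carrier_vec n \<Longrightarrow> \<forall>j<n. underline (z j) \<bullet> y = - z j $ n \<Longrightarrow> y = x"
    using lin_indep_family_ex1_solution[OF ind, of "\<lambda>j. - z j $ n"] by blast
  define a where "a = vec (Suc n) (\<lambda>i. if i < n then x $ i else 1)"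
  have a: "a \<in> pi_d (Suc n)" and ua: "underline a = x"
    using x(1) by (auto simp: a_def pi_d_Suc_iff underline_def vec_eq_iff)
  show ?thesis
  proof (rule ex1I[of _ a])
    show "a \<in> pi_d (Suc n) \<and> (\<forall>j<n. a \<bullet> z j = 0)" using a ua x(2) orth by simp
    fix b assume b: "b \<in> pi_d (Suc n) \<and> (\<forall>j<n. b \<bullet> z j = 0)"
    hence "underline b = x" using orth by (intro uniq) (auto simp: pi_d_Suc_iff)
    thus "b = a" using a b ua eq_iff_underline_eq by (auto simp: pi_d_Suc_iff)
  qed
qed

lemma alpha_spec:
  assumes n: "n \<ge> 1" and z: "\<And>j. j < n \<Longrightarrow> z (k + j) \<in> carrier_vec (Suc n)"
    and ind: "lin_indep_family n n (\<lambda>j. underline (z (k + j)))"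
  shows "alpha (Suc n) z k \<in> pi_d (Suc n) \<and> (\<forall>j<n. alpha (Suc n) z k \<bullet> z (k + j) = 0)"
proof -
  have "{k..k + Suc n - 2} = (\<lambda>j. k + j) ` {..<n}"
  proof (intro Set.set_eqI iffI)
    fix i assume "i \<in> {k..k + Suc n - 2}"
    thus "i \<in> (\<lambda>j. k + j) ` {..<n}" using n by (intro image_eqI[of _ _ "i - k"]) auto
  qed (use n in auto)
  hence "(\<forall>j\<in>{k..k + Suc n - 2}. a \<bullet> z j = 0) \<longleftrightarrow> (\<forall>j<n. a \<bullet> z (k + j) = 0)" for a
    by auto
  thus ?thesis
    unfolding alpha_def using theI'[OF pi_d_orthogonal_ex1[of n "\<lambda>j. z (k + j)", OF z ind]]
    by simp
qed

lemma eucl_norm_alpha_diff_mult_volume: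
  assumes z: "\<And>j. 1 \<le> j \<Longrightarrow> j \<le> Suc (Suc m) \<Longrightarrow> z j \<in> carrier_vec (Suc (Suc m))"
    and ind1: "lin_indep_family (Suc m) (Suc m) (\<lambda>j. underline (z (1 + j)))"
    and ind2: "lin_indep_family (Suc m) (Suc m) (\<lambda>j. underline (z (2 + j)))"
  shows "eucl_norm (alpha (Suc (Suc m)) z 1 - alpha (Suc (Suc m)) z 2) *
      detLam_under z 1 (Suc m) =
    \<bar>alpha (Suc (Suc m)) z 2 \<bullet> z 1\<bar> * detLam_under z 2 m"
proof -
  define a1 a2 where "a1 = alpha (Suc (Suc m)) z 1" and "a2 = alpha (Suc (Suc m)) z 2"
  have a1: "a1 \<in> pi_d (Suc (Suc m))" "\<And>j. j < Suc m \<Longrightarrow> a1 \<bullet> z (1 + j) = 0"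
    using alpha_spec[of "Suc m" z 1] z ind1 unfolding a1_def by auto
  have a2: "a2 \<in> pi_d (Suc (Suc m))" "\<And>j. j < Suc m \<Longrightarrow> a2 \<bullet> z (2 + j) = 0"
    using alpha_spec[of "Suc m" z 2] z ind2 unfolding a2_def by auto
  have diff: "a1 - a2 \<in> carrier_vec (Suc (Suc m))" "(a1 - a2) $ Suc m = 0"
    using a1(1) a2(1) by (auto simp: pi_d_Suc_iff)
  define w where "w = underline (a1 - a2)"
  define g where "g j = underline (z (1 + j))" for j
  have g: "g j \<in> carrier_vec (Suc m)" if "j \<le> Suc m" for j
    using z that by (simp add: g_def)
  have wg: "w \<bullet> g j = a1 \<bullet> z (1 + j) - a2 \<bullet> z (1 + j)" if "j \<le> Suc m" for j
  proof -
    have zj: "z (1 + j) \<in> carrier_vec (Suc (Suc m))" using z that by simp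
    have "a1 \<bullet> z (1 + j) - a2 \<bullet> z (1 + j) = (a1 - a2) \<bullet> z (1 + j)"
      using a1(1) a2(1) zj minus_scalar_prod_distrib[of a1 "Suc (Suc m)" a2 "z (1 + j)"]
      by (simp add: pi_d_Suc_iff)
    thus ?thesis using scalar_prod_underline[OF diff(1) zj] diff(2) by (simp add: w_def g_def)
  qed
  have "sqrt (w \<bullet> w) * \<bar>det (colmat (Suc m) (Suc m) g)\<bar> =
      \<bar>w \<bullet> g 0\<bar> * par_volume m (\<lambda>j. g (Suc j))"
  proof (rule norm_mult_abs_det_colmat_orth)
    show "lin_indep_family (Suc m) m (\<lambda>j. g (Suc j))"
      using lin_indep_family_Suc_shift[OF ind1] by (simp add: g_def)
    show "w \<bullet> g j = 0" if "0 < j" "j \<le> m" for j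
      using wg[of j] a1(2)[of j] a2(2)[of "j - 1"] that by simp
  qed (use diff g in \<open>auto simp: w_def\<close>)
  moreover have "eucl_norm (a1 - a2) = sqrt (w \<bullet> w)"
    using scalar_prod_underline[OF diff(1) diff(1)] diff(2) by (simp add: eucl_norm_def w_def)
  moreover have "detLam_under z 1 (Suc m) = \<bar>det (colmat (Suc m) (Suc m) g)\<bar>"
    using par_volume_eq_abs_det[of "Suc m" g] g by (simp add: detLam_under_def g_def[abs_def])
  moreover have "detLam_under z 2 m = par_volume m (\<lambda>j. g (Suc j))"
    by (simp add: detLam_under_def g_def)
  moreover have "w \<bullet> g 0 = - (a2 \<bullet> z 1)"
    using wg[of 0] a1(2)[of 0] by simp
  ultimately show ?thesis unfolding a1_def a2_def by simp
qed

lemma detLam_full_eq_alpha_scalar_prod: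
  assumes n: "n \<ge> 1" and z: "\<And>j. 1 \<le> j \<Longrightarrow> j \<le> Suc n \<Longrightarrow> z j \<in> carrier_vec (Suc n)"
    and ind2: "lin_indep_family n n (\<lambda>j. underline (z (2 + j)))"
  shows "detLam_full (Suc n) z = \<bar>alpha (Suc n) z 2 \<bullet> z 1\<bar> * detLam_under z 2 n"
proof -
  let ?a = "alpha (Suc n) z 2"
  have a: "?a \<in> pi_d (Suc n)" "\<And>j. j < n \<Longrightarrow> ?a \<bullet> z (2 + j) = 0"
    using alpha_spec[of n z 2] n z ind2 by auto
  have "?a \<bullet> z (Suc j) = 0" if "0 < j" "j \<le> n" for j
    using a(2)[of "j - 1"] that by simp
  hence "\<bar>det (colmat (Suc n) (Suc n) (\<lambda>j. z (Suc j)))\<bar> =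
      \<bar>?a \<bullet> z 1\<bar> * \<bar>det (colmat n n (\<lambda>j. underline (z (Suc (Suc j)))))\<bar>"
    using abs_det_colmat_orth[OF a(1), of "\<lambda>j. z (Suc j)"] z by simp
  moreover have "detLam_under z 2 n = \<bar>det (colmat n n (\<lambda>j. underline (z (Suc (Suc j)))))\<bar>"
    using par_volume_eq_abs_det[of n "\<lambda>j. underline (z (Suc (Suc j)))"] z
    by (simp add: detLam_under_def)
  ultimately show ?thesis by (simp add: detLam_full_eq_abs_det)
qed

theorem lemma5:
  fixes d :: nat and z :: "nat \<Rightarrow> real vec"
  assumes "d \<ge> 3"
    and "\<forall>k\<in>{1..d}. z k \<in> carrier_vec d"
    and "lin_indep_family d d (\<lambda>j. z (j + 1))"
    and "lin_indep_family (d - 1) (d - 1) (\<lambda>j. underline (z (1 + j)))"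
    and "lin_indep_family (d - 1) (d - 1) (\<lambda>j. underline (z (2 + j)))"
  shows "eucl_norm (alpha d z 1 - alpha d z 2) =
    (detLam_under z 2 (d - 2) * detLam_full d z) /
    (detLam_under z 1 (d - 1) * detLam_under z 2 (d - 1))"
proof -
  obtain m where d: "d = Suc (Suc m)" using assms(1) by (intro that[of "d - 2"]) simp
  have z: "\<And>j. 1 \<le> j \<Longrightarrow> j \<le> d \<Longrightarrow> z j \<in> carrier_vec d" using assms(2) by simp
  have volume_nonzero: "detLam_under z k (d - 1) \<noteq> 0"
    if "k \<in> {1, 2}" and "lin_indep_family (d - 1) (d - 1) (\<lambda>j. underline (z (k + j)))" for k
    unfolding detLam_under_def
    by (rule par_volume_nonzero[OF that(2)]) (use z that(1) in \<open>auto simp: d\<close>)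
  have "eucl_norm (alpha d z 1 - alpha d z 2) * detLam_under z 1 (d - 1) =
      \<bar>alpha d z 2 \<bullet> z 1\<bar> * detLam_under z 2 (d - 2)"
    using eucl_norm_alpha_diff_mult_volume[of m z] z assms(4,5) unfolding d by simp
  moreover have "detLam_full d z = \<bar>alpha d z 2 \<bullet> z 1\<bar> * detLam_under z 2 (d - 1)"
    using detLam_full_eq_alpha_scalar_prod[of "Suc m" z] z assms(5) unfolding d by simp
  ultimately show ?thesis
    using volume_nonzero[of 1] volume_nonzero[of 2] assms(4,5) by (simp add: field_simps)
qed

end
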